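(* Let $(Y_{i\,j})_{i,j\in\mathbb N}$ be i.i.d. real random variables with $\mathbb E[Y_{1\,1}]=0$, $\mathbb E[Y_{1\,1}^2]=1$, let $l\in\mathbb N$ and assume $\mathbb E[Y_{1\,1}^{2l}]<\infty$. Let $V_{l+1}\subset\mathbb N$ with $\#V_{l+1}=l+1$ and let $\mathbf i,\mathbf k\in V_{l+1}^l$ with $\{i_1,\dots,i_l\}\cup\{k_1,\dots,k_l\}=V_{l+1}$. Then $$\mathbb E\big[(Y_{i_1\,k_1}Y_{i_2\,k_1})\cdots(Y_{i_{l-1}\,k_{l-1}}Y_{i_l\,k_{l-1}})(Y_{i_l\,k_l}Y_{i_1\,k_l})\big]=\mathbb 1_{G_{\langle\mathbf i,\mathbf k\rangle}\in\mathcal T_{V_{l+1}}}.$$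
   Context: $\langle\mathbf i,\mathbf k\rangle=(i_1,k_1,\dots,i_l,k_l)$. For a finite $V\subset\mathbb N$ and $N\ge1$, a route through $V$ of length $N$ is a sequence $\mathbf i\in V^N$ whose set of entries equals $V$; its circuit multigraph $G_{\mathbf i}$ has vertex set $V$ and edges $1,\dots,N$, edge $k<N$ from $i_k$ to $i_{k+1}$, edge $N$ from $i_N$ to $i_1$; $\mathcal C_{V,N}$ is the set of these. A directed multigraph is balanced if its edges split into pairs $(e,e')$ with the head of $e$ the tail of $e'$ and vice versa. $\mathcal T_{V_{l+1}}$ is the set of balanced $G\in\mathcal C_{V_{l+1},2l}$ (balanced trees). *)

theory Defs
  imports "HOL-Probability.Probability"
begin

text \<open>A directed multigraph: vertex set, edge set, tail map, head map.\<close>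
type_synonym 'v mgraph = "'v set \<times> nat set \<times> (nat \<Rightarrow> 'v) \<times> (nat \<Rightarrow> 'v)"

text \<open>Circuit multigraph of a route xs (edges 0..N-1, edge e from xs!e to xs!((e+1) mod N);
  this is the paper's edge e+1, and edge N-1 goes from the last entry to the first).\<close>
definition circuit_graph :: "'v list \<Rightarrow> 'v mgraph" where
  "circuit_graph xs = (set xs, {..<length xs}, (\<lambda>e. xs ! e), (\<lambda>e. xs ! (Suc e mod length xs)))"

definition is_route :: "'v set \<Rightarrow> nat \<Rightarrow> 'v list \<Rightarrow> bool" where
  "is_route V N xs \<longleftrightarrow> finite V \<and> N \<ge> 1 \<and> length xs = N \<and> set xs = V"

definition circuits :: "'v set \<Rightarrow> nat \<Rightarrow> 'v mgraph set" where
  "circuits V N = {circuit_graph xs | xs. is_route V N xs}"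

definition balanced :: "'v mgraph \<Rightarrow> bool" where
  "balanced G \<longleftrightarrow> (case G of (V, E, tail, head) \<Rightarrow>
     (\<exists>f. \<forall>e\<in>E. f e \<in> E \<and> f e \<noteq> e \<and> f (f e) = e \<and> head e = tail (f e) \<and> head (f e) = tail e))"

definition balanced_trees :: "'v set \<Rightarrow> 'v mgraph set" where
  "balanced_trees V = {G \<in> circuits V (2 * (card V - 1)). balanced G}"

definition interleave :: "'v list \<Rightarrow> 'v list \<Rightarrow> 'v list" where
  "interleave is ks = concat (map (\<lambda>(a, b). [a, b]) (zip is ks))"

end

(* Read <i,k> as a closed walk w of length 2l through the l + 1 vertices of V; step e
   contributes the factor Y at the matrix entry cell w e. By independence the expectation is
   the product, over the distinct entries p, of E[Y^mult p], where mult p counts the steps reading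
   p: it vanishes as soon as some entry is read only once (E Y = 0), and it is 1 when every entry
   is read exactly twice (E Y^2 = 1).

   A closed walk through l + 1 vertices uses at least l distinct undirected edges, so if every
   entry is read at least twice then every edge is traversed by exactly two twin steps. Without
   the twins too few edges remain to connect the vertices, so the two arcs of the walk between
   them are vertex-disjoint. Hence twins traverse their edge in opposite directions and are an
   odd number of steps apart, i.e. they read the same entry. Conversely the steps paired by
   balancedness are twins. So every entry is read exactly twice iff the circuit is balanced. *)

theory Submission
  imports Defs
begin

lemma card_eq_sum_card_fibres:
  assumes "finite A"
  shows "card A = (\<Sum>b\<in>g ` A. card {x\<in>A. g x = b})"
  using sum.image_gen[OF assms, of "\<lambda>_. 1::nat" g] by simp

lemma two_mul_card_image_le:
  assumes "finite A" "\<And>x. x \<in> A \<Longrightarrow> 2 \<le> card {y\<in>A. g y = g x}"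
  shows "2 * card (g ` A) \<le> card A"
proof -
  have "2 * card (g ` A) = (\<Sum>b\<in>g ` A. 2)" by simp
  also have "\<dots> \<le> (\<Sum>b\<in>g ` A. card {x\<in>A. g x = b})"
    using assms(2) by (intro sum_mono) auto
  finally show ?thesis using card_eq_sum_card_fibres[OF assms(1), of g] by simp
qed

lemma card_fibres_eq_two:
  assumes "finite A" "\<And>x. x \<in> A \<Longrightarrow> 2 \<le> card {y\<in>A. g y = g x}"
    and "card A \<le> 2 * card (g ` A)" and "x \<in> A"
  shows "card {y\<in>A. g y = g x} = 2"
proof (rule ccontr)
  assume "card {y\<in>A. g y = g x} \<noteq> 2"
  then have "(\<Sum>b\<in>g ` A. 2) < (\<Sum>b\<in>g ` A. card {y\<in>A. g y = b})"
    using assms by (intro sum_strict_mono_ex1) (auto intro!: bexI[of _ x] le_neq_implies_less)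
  then show False using assms(3) card_eq_sum_card_fibres[OF assms(1), of g] by simp
qed

lemma even_card_involution:
  assumes "finite A" "\<And>x. x \<in> A \<Longrightarrow> f x \<in> A \<and> f x \<noteq> x \<and> f (f x) = x"
  shows "even (card A)"
proof -
  define orbit where "orbit x = {x, f x}" for x
  have "card A = (\<Sum>b\<in>orbit ` A. card {x\<in>A. orbit x = b})"
    by (rule card_eq_sum_card_fibres[OF assms(1)])
  also have "\<dots> = (\<Sum>b\<in>orbit ` A. 2)"
  proof (rule sum.cong)
    fix b assume "b \<in> orbit ` A"
    then obtain x where "x \<in> A" "b = orbit x" by blast
    then have "{y\<in>A. orbit y = b} = {x, f x}" "f x \<noteq> x"
      using assms(2) by (auto simp: orbit_def doubleton_eq_iff)
    then show "card {y\<in>A. orbit y = b} = 2" by simp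
  qed simp
  finally show ?thesis by simp
qed

lemma card_insert_le_by_new_edge:
  assumes "card T \<le> c + card (A - F)" "finite T" "finite B" "A \<subseteq> B"
    and "E \<in> B" "x \<in> E" "\<And>E'. E' \<in> A \<union> F \<Longrightarrow> E' \<subseteq> T"
  shows "card (insert x T) \<le> c + card (B - F)"
proof (cases "x \<in> T")
  case True
  have "card (A - F) \<le> card (B - F)" using assms(3,4) by (intro card_mono) auto
  then show ?thesis using assms(1) True by (simp add: insert_absorb)
next
  case False
  then have "E \<notin> A \<union> F" using assms(6,7) by blast
  then have "A - F \<subset> B - F" using assms(4,5) by blast
  then have "card (A - F) < card (B - F)" using assms(3) by (intro psubset_card_mono) auto
  then show ?thesis using assms(1,2) False by simp
qed

lemma card_walk_vertices_le:
  fixes w :: "nat \<Rightarrow> 'v"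
  assumes "finite S" "\<And>E. E \<in> F \<Longrightarrow> E \<subseteq> S" "m \<in> {i..k}" "w m \<in> S"
  shows "card (S \<union> w ` {i..k}) \<le> card S + card ((\<lambda>j. {w j, w (Suc j)}) ` {i..<k} - F)"
proof -
  let ?U = "\<lambda>j. {w j, w (Suc j)}"
  have "card (S \<union> w ` {i..i + d}) \<le> card S + card (?U ` {i..<i + d} - F)"
    if "m \<in> {i..i + d}" for d i
    using that
  proof (induction d arbitrary: i)
    case 0
    then show ?case using assms(4) by (simp add: insert_absorb)
  next
    case (Suc d)
    have old_edges: "?U j \<subseteq> S \<union> w ` {a..b}" if "j \<in> {a..<b}" for j a b
      using that by auto
    show ?case
    proof (cases "m \<le> i + d")
      case True
      have "S \<union> w ` {i..i + Suc d} = insert (w (Suc (i + d))) (S \<union> w ` {i..i + d})"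
        by (auto simp: atLeastAtMostSuc_conv)
      moreover have "card (insert (w (Suc (i + d))) (S \<union> w ` {i..i + d}))
          \<le> card S + card (?U ` {i..<i + Suc d} - F)"
        using Suc True assms(1,2) old_edges
        by (intro card_insert_le_by_new_edge[where A = "?U ` {i..<i + d}" and E = "?U (i + d)"]) auto
      ultimately show ?thesis by simp
    next
      case False
      then have "m \<in> {Suc i..Suc i + d}" using Suc.prems by auto
      have "S \<union> w ` {i..i + Suc d} = insert (w i) (S \<union> w ` {Suc i..Suc i + d})"
        by (auto simp: atLeastAtMost_insertL[symmetric])
      moreover have "card (insert (w i) (S \<union> w ` {Suc i..Suc i + d}))
          \<le> card S + card (?U ` {i..<i + Suc d} - F)"
        using Suc.IH[OF \<open>m \<in> {Suc i..Suc i + d}\<close>] assms(1,2) old_edges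
        by (intro card_insert_le_by_new_edge[where A = "?U ` {Suc i..<Suc i + d}" and E = "?U i"])
          auto
      ultimately show ?thesis by simp
    qed
  qed
  from this[of i "k - i"] show ?thesis using assms(3) by simp
qed

lemma obtain_fibre_involution:
  assumes "\<And>x. x \<in> A \<Longrightarrow> card {y\<in>A. g y = g x} = 2"
  obtains f where "\<And>x. x \<in> A \<Longrightarrow> f x \<in> A \<and> f x \<noteq> x \<and> f (f x) = x \<and> g (f x) = g x"
proof
  define f where "f x = (SOME y. y \<in> A \<and> g y = g x \<and> y \<noteq> x)" for x
  have fibre: "\<exists>a b. {y\<in>A. g y = g x} = {a, b} \<and> a \<noteq> b" if "x \<in> A" for x
    using assms[OF that] by (simp add: card_2_iff)
  have f: "f x \<in> A \<and> g (f x) = g x \<and> f x \<noteq> x" if x: "x \<in> A" for x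
  proof -
    have "\<exists>y. y \<in> A \<and> g y = g x \<and> y \<noteq> x" using fibre[OF x] x by blast
    then show ?thesis unfolding f_def by (rule someI_ex)
  qed
  show "f x \<in> A \<and> f x \<noteq> x \<and> f (f x) = x \<and> g (f x) = g x" if x: "x \<in> A" for x
  proof -
    obtain a b where ab: "{y\<in>A. g y = g x} = {a, b}" using fibre[OF x] by blast
    have ffx: "f (f x) \<in> A" "g (f (f x)) = g x" "f (f x) \<noteq> f x"
      using f[OF x] f[of "f x"] by simp_all
    have "x \<in> {a, b}" "f x \<in> {a, b}" "f (f x) \<in> {a, b}"
      using f[OF x] ffx x unfolding ab[symmetric] by simp_all
    then have "f (f x) = x" using f[OF x] ffx(3) by blast
    then show ?thesis using f[OF x] by simp
  qed
qed

definition reversal_pairing :: "(nat \<Rightarrow> 'v) \<Rightarrow> nat \<Rightarrow> (nat \<Rightarrow> nat) \<Rightarrow> bool" where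
  "reversal_pairing w n f \<longleftrightarrow>
     (\<forall>e<n. f e < n \<and> f e \<noteq> e \<and> f (f e) = e \<and> w (f e) = w (Suc e) \<and> w (Suc (f e)) = w e)"

lemma balanced_circuit_graph_iff:
  "balanced (circuit_graph xs) \<longleftrightarrow>
     (\<exists>f. reversal_pairing (\<lambda>j. xs ! (j mod length xs)) (length xs) f)"
proof -
  have "(xs ! (Suc e mod length xs) = xs ! (f e) \<and> xs ! (Suc (f e) mod length xs) = xs ! e)
      \<longleftrightarrow> (xs ! (f e mod length xs) = xs ! (Suc e mod length xs)
         \<and> xs ! (Suc (f e) mod length xs) = xs ! (e mod length xs))"
    if "e < length xs" "f e < length xs" for f e
    using that by auto
  then show ?thesis
    unfolding balanced_def circuit_graph_def reversal_pairing_def prod.case lessThan_iff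
    by (intro ex_cong1) blast
qed

text \<open>On the walk along the interleaved word \<open>(i\<^sub>1, k\<^sub>1, \<dots>, i\<^sub>l, k\<^sub>l)\<close>, even steps go
  from \<open>i\<^sub>m\<close> to \<open>k\<^sub>m\<close> and odd steps from \<open>k\<^sub>m\<close> back to \<open>i\<^sub>m\<^sub>+\<^sub>1\<close>; either way step
  \<open>e\<close> contributes the factor \<open>Y\<close> at the entry \<open>cell w e\<close>, row index first.\<close>

definition cell :: "(nat \<Rightarrow> 'v) \<Rightarrow> nat \<Rightarrow> 'v \<times> 'v" where
  "cell w e = (if even e then (w e, w (Suc e)) else (w (Suc e), w e))"

lemma edge_eq_if_cell_eq: "cell w j = cell w e \<Longrightarrow> {w j, w (Suc j)} = {w e, w (Suc e)}"
  by (auto simp: cell_def split: if_splits)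

locale closed_walk =
  fixes w :: "nat \<Rightarrow> 'v" and n :: nat
  assumes periodic: "\<And>j. w (j mod n) = w j" and length_pos: "0 < n"
begin

abbreviation edge :: "nat \<Rightarrow> 'v set" where
  "edge j \<equiv> {w j, w (Suc j)}"

lemma w_add_length: "w (j + n) = w j"
  by (metis periodic mod_add_self2)

lemma edge_mod: "edge (j mod n) = edge j"
  by (metis periodic mod_Suc_eq)

lemma image_period_window: "w ` {a..<a + n} = w ` {..<n}"
proof (induction a)
  case 0
  show ?case by (simp add: lessThan_atLeast0)
next
  case (Suc a)
  have "{a..<a + n} = insert a {Suc a..<a + n}"
    and "{Suc a..<Suc a + n} = insert (a + n) {Suc a..<a + n}"
    using length_pos by auto
  then show ?case using Suc w_add_length by simp
qed

lemma card_vertices_le: "card (w ` {..<n}) \<le> Suc (card (edge ` {..<n}))"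
proof -
  have "card ({w 0} \<union> w ` {0..n - 1}) \<le> card {w 0} + card (edge ` {0..<n - 1} - {})"
    by (rule card_walk_vertices_le[of _ _ 0]) auto
  moreover have "{w 0} \<union> w ` {0..n - 1} = w ` {..<n}" using length_pos by auto
  moreover have "card (edge ` {0..<n - 1}) \<le> card (edge ` {..<n})" by (intro card_mono) auto
  ultimately show ?thesis by simp
qed

end

locale tree_walk = closed_walk +
  fixes l :: nat
  assumes length_eq: "n = 2 * l" and card_vertices: "card (w ` {..<n}) = Suc l"
begin

lemma card_edges_ge: "l \<le> card (edge ` {..<n})"
  using card_vertices_le card_vertices by simp

end

locale paired_tree_walk = tree_walk +
  fixes f :: "nat \<Rightarrow> nat"
  assumes edge_pairing: "\<And>e. e < n \<Longrightarrow> f e < n \<and> f e \<noteq> e \<and> f (f e) = e \<and> edge (f e) = edge e"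
begin

lemma pair_subset_edge_fibre: "e < n \<Longrightarrow> {e, f e} \<subseteq> {j\<in>{..<n}. edge j = edge e}"
  using edge_pairing by auto

lemma card_edge_fibre_ge:
  assumes "e < n"
  shows "2 \<le> card {j\<in>{..<n}. edge j = edge e}"
proof -
  have "card {e, f e} = 2" using edge_pairing[OF assms] by simp
  then show ?thesis using card_mono[OF _ pair_subset_edge_fibre[OF assms]] by simp
qed

lemma card_edges: "card (edge ` {..<n}) = l"
  using two_mul_card_image_le[of "{..<n}" edge] card_edge_fibre_ge card_edges_ge length_eq by simp

lemma edge_fibre:
  assumes "e < n"
  shows "{j\<in>{..<n}. edge j = edge e} = {e, f e}"
proof -
  have "card {j\<in>{..<n}. edge j = edge e} = 2"
    by (rule card_fibres_eq_two) (use assms card_edge_fibre_ge card_edges length_eq in auto)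
  moreover have "card {e, f e} = 2" using edge_pairing[OF assms] by simp
  ultimately show ?thesis using card_subset_eq[OF _ pair_subset_edge_fibre[OF assms]] by simp
qed

lemma edge_eq_iff_twin:
  assumes "e < n"
  shows "edge j = edge e \<longleftrightarrow> j mod n \<in> {e, f e}"
proof -
  have "edge j = edge e \<longleftrightarrow> j mod n \<in> {j\<in>{..<n}. edge j = edge e}"
    using edge_mod[of j] length_pos by simp
  then show ?thesis unfolding edge_fibre[OF assms] .
qed

text \<open>Apart from the twin edges \<open>e\<close> and \<open>f e\<close>, the circuit uses only \<open>l - 1\<close> distinct
  edges, too few to connect its \<open>l + 1\<close> vertices: the two arcs between the twins cannot meet.\<close>

lemma twin_arcs_disjoint:
  assumes e: "e < n" "e < f e"
  shows "w ` {Suc e..f e} \<inter> w ` {Suc (f e)..e + n} = {}"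
proof (rule ccontr)
  define e' where "e' = f e"
  define A where "A = w ` {Suc e..e'}"
  define F where "F = edge ` {Suc e..<e'}"
  define G where "G = edge ` {Suc e'..<e + n}"
  have e': "e' < n" "e < e'" "f e' = e" using edge_pairing[OF e(1)] e(2) by (auto simp: e'_def)
  assume "w ` {Suc e..f e} \<inter> w ` {Suc (f e)..e + n} \<noteq> {}"
  then obtain x where "x \<in> A" "x \<in> w ` {Suc e'..e + n}" by (auto simp: A_def e'_def)
  then obtain m where m: "m \<in> {Suc e'..e + n}" "w m \<in> A" by blast
  have "card ({w (Suc e)} \<union> A) \<le> card {w (Suc e)} + card (F - {})"
    unfolding A_def F_def by (rule card_walk_vertices_le[of _ _ "Suc e"]) (use e' in auto)
  moreover have "{w (Suc e)} \<union> A = A" using e' by (auto simp: A_def)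
  ultimately have card_A: "card A \<le> Suc (card F)" by simp
  have "card (A \<union> w ` {Suc e'..e + n}) \<le> card A + card (G - F)"
    unfolding G_def by (rule card_walk_vertices_le[where w = w, OF _ _ m]) (auto simp: A_def F_def)
  moreover have "A \<union> w ` {Suc e'..e + n} = w ` {..<n}"
  proof -
    have "{Suc e..e'} \<union> {Suc e'..e + n} = {Suc e..<Suc e + n}" using e' by auto
    then show ?thesis
      using image_period_window[of "Suc e"] unfolding A_def image_Un[symmetric] by simp
  qed
  ultimately have card_AB: "Suc l \<le> card A + card (G - F)" using card_vertices by simp
  have "F \<union> G \<subseteq> edge ` {..<n} - {edge e}"
  proof
    fix E assume "E \<in> F \<union> G"
    then have "E \<in> edge ` ({Suc e..<e'} \<union> {Suc e'..<e + n})" unfolding F_def G_def image_Un .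
    then obtain j where j: "j \<in> {Suc e..<e'} \<union> {Suc e'..<e + n}" "E = edge j" by blast
    have "j mod n \<notin> {e, e'}"
    proof (cases "j < n")
      case False
      then have "j mod n = j - n" using j e' by (simp add: le_mod_geq)
      then show ?thesis using j e' False by auto
    qed (use j e' in auto)
    then show "E \<in> edge ` {..<n} - {edge e}"
      using j(2) edge_eq_iff_twin[OF e(1), of j] edge_mod[of j] length_pos by (auto simp: e'_def)
  qed
  then have "card (F \<union> G) \<le> card (edge ` {..<n} - {edge e})" by (intro card_mono) auto
  also have "\<dots> = l - 1" using card_edges e(1) by (simp add: card_Diff_singleton)
  finally have "card (F \<union> G) \<le> l - 1" .
  moreover have "card (F \<union> G) = card F + card (G - F)"
    using card_Un_disjoint[of F "G - F"] by (simp add: F_def G_def)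
  ultimately show False using card_A card_AB length_eq length_pos by simp
qed

lemma twin_edges_of_less:
  assumes e: "e < n" "e < f e"
  shows "w (f e) = w (Suc e) \<and> w (Suc (f e)) = w e \<and> (even (f e) \<longleftrightarrow> odd e)"
proof -
  define e' where "e' = f e"
  define A where "A = w ` {Suc e..e'}"
  define B where "B = w ` {Suc e'..e + n}"
  have e': "e' < n" "e < e'" "f e' = e" using edge_pairing[OF e(1)] e(2) by (auto simp: e'_def)
  have disjoint: "A \<inter> B = {}" using twin_arcs_disjoint[OF e] by (simp add: A_def B_def e'_def)
  have outside: "w j \<in> B" if "j < n" "j \<le> e \<or> e' < j" for j
  proof (cases "j \<le> e")
    case True
    then have "j + n \<in> {Suc e'..e + n}" using e' by auto
    then show ?thesis unfolding B_def using w_add_length by (metis image_eqI)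
  qed (use that in \<open>auto simp: B_def\<close>)
  have "w e' \<in> A" using e' by (auto simp: A_def)
  then have "w e' \<noteq> w e" using outside[of e] disjoint e(1) by auto
  moreover have "{w e', w (Suc e')} = {w e, w (Suc e)}"
    using edge_pairing[OF e(1)] by (simp add: e'_def)
  ultimately have reversed: "w e' = w (Suc e) \<and> w (Suc e') = w e" by (auto simp: doubleton_eq_iff)
  have "f g \<in> {Suc e..<e'} \<and> f g \<noteq> g \<and> f (f g) = g" if g: "g \<in> {Suc e..<e'}" for g
  proof -
    have pair: "f g < n" "f g \<noteq> g" "f (f g) = g" "edge (f g) = edge g"
      using edge_pairing[of g] g e' by auto
    have "w (f g) \<in> A"
    proof -
      have "w (f g) \<in> edge g" using pair(4) by blast
      then show ?thesis using g by (auto simp: A_def)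
    qed
    then have "w (f g) \<notin> B" using disjoint by blast
    then have "\<not> (f g \<le> e \<or> e' < f g)" using outside pair(1) by blast
    moreover have "f g \<noteq> e'" using pair(3) e' g by auto
    ultimately show ?thesis using pair by auto
  qed
  then have "even (card {Suc e..<e'})" by (intro even_card_involution[where f = f]) auto
  then have "odd (e' - e)" using e' by simp
  then have "even e' \<longleftrightarrow> odd e" using e' by presburger
  then show ?thesis using reversed by (simp add: e'_def)
qed

lemma twin_edges:
  assumes "e < n"
  shows "w (f e) = w (Suc e) \<and> w (Suc (f e)) = w e \<and> (even (f e) \<longleftrightarrow> odd e)"
proof (cases "e < f e")
  case True
  then show ?thesis using twin_edges_of_less[OF assms] by blast
next
  case False
  have pair: "f e < n" "f e \<noteq> e" "f (f e) = e" using edge_pairing[OF assms] by auto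
  then have "f e < f (f e)" using False by simp
  then have "w (f (f e)) = w (Suc (f e)) \<and> w (Suc (f (f e))) = w (f e)
      \<and> (even (f (f e)) \<longleftrightarrow> odd (f e))"
    using twin_edges_of_less[OF pair(1)] by blast
  then show ?thesis using pair(3) by auto
qed

lemma cell_twin: "e < n \<Longrightarrow> cell w (f e) = cell w e"
  using twin_edges[of e] by (auto simp: cell_def)

end

context tree_walk
begin

lemma card_cell_fibre_eq_two:
  assumes "\<And>e. e < n \<Longrightarrow> 2 \<le> card {j\<in>{..<n}. cell w j = cell w e}" and "e < n"
  shows "card {j\<in>{..<n}. cell w j = cell w e} = 2"
proof -
  have "edge j = (\<lambda>(a, b). {a, b}) (cell w j)" for j
    by (simp add: cell_def insert_commute)
  then have "edge ` {..<n} = (\<lambda>(a, b). {a, b}) ` cell w ` {..<n}"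
    by (simp add: image_image)
  then have "card (edge ` {..<n}) \<le> card (cell w ` {..<n})"
    using card_image_le[of "cell w ` {..<n}" "\<lambda>(a, b). {a, b}"] by simp
  then have bound: "card {..<n} \<le> 2 * card (cell w ` {..<n})" using card_edges_ge length_eq by simp
  show ?thesis by (rule card_fibres_eq_two[OF _ _ bound]) (use assms in auto)
qed

lemma ex_reversal_pairing_iff:
  "(\<exists>f. reversal_pairing w n f) \<longleftrightarrow> (\<forall>e<n. 2 \<le> card {j\<in>{..<n}. cell w j = cell w e})"
proof
  assume "\<exists>f. reversal_pairing w n f"
  then obtain f where f: "reversal_pairing w n f" ..
  interpret paired_tree_walk w n l f
    by unfold_locales (use f in \<open>auto simp: reversal_pairing_def\<close>)
  show "\<forall>e<n. 2 \<le> card {j\<in>{..<n}. cell w j = cell w e}"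
  proof (intro allI impI)
    fix e assume e: "e < n"
    have "{e, f e} \<subseteq> {j\<in>{..<n}. cell w j = cell w e}"
      using cell_twin[OF e] edge_pairing[OF e] e by auto
    then show "2 \<le> card {j\<in>{..<n}. cell w j = cell w e}"
      using card_mono[of "{j\<in>{..<n}. cell w j = cell w e}" "{e, f e}"] edge_pairing[OF e] by simp
  qed
next
  assume "\<forall>e<n. 2 \<le> card {j\<in>{..<n}. cell w j = cell w e}"
  then have "card {j\<in>{..<n}. cell w j = cell w e} = 2" if "e \<in> {..<n}" for e
    using card_cell_fibre_eq_two that by blast
  then obtain f
    where f: "\<And>e. e \<in> {..<n} \<Longrightarrow> f e \<in> {..<n} \<and> f e \<noteq> e \<and> f (f e) = e \<and> cell w (f e) = cell w e"
    using obtain_fibre_involution[of "{..<n}" "cell w"] by blast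
  interpret paired_tree_walk w n l f
  proof
    fix e assume "e < n"
    then show "f e < n \<and> f e \<noteq> e \<and> f (f e) = e \<and> edge (f e) = edge e"
      using f[of e] edge_eq_if_cell_eq[of w "f e" e] by simp
  qed
  have "reversal_pairing w n f"
    unfolding reversal_pairing_def
  proof (intro allI impI)
    fix e assume "e < n"
    then show "f e < n \<and> f e \<noteq> e \<and> f (f e) = e \<and> w (f e) = w (Suc e) \<and> w (Suc (f e)) = w e"
      using f[of e] twin_edges[of e] by simp
  qed
  then show "\<exists>f. reversal_pairing w n f" by blast
qed

lemma prod_cell_fibres:
  fixes \<mu> :: "nat \<Rightarrow> 'b::comm_semiring_1"
  assumes "\<mu> 1 = 0" "\<mu> 2 = 1"
  shows "(\<Prod>p\<in>cell w ` {..<n}. \<mu> (card {e\<in>{..<n}. cell w e = p}))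
       = (if \<forall>e<n. 2 \<le> card {j\<in>{..<n}. cell w j = cell w e} then 1 else 0)"
proof (cases "\<forall>e<n. 2 \<le> card {j\<in>{..<n}. cell w j = cell w e}")
  case True
  then have "card {e\<in>{..<n}. cell w e = p} = 2" if "p \<in> cell w ` {..<n}" for p
    using card_cell_fibre_eq_two that by auto
  then show ?thesis using True assms(2) by simp
next
  case False
  then obtain e where e: "e < n" "card {j\<in>{..<n}. cell w j = cell w e} < 2" by auto
  moreover have "0 < card {j\<in>{..<n}. cell w j = cell w e}"
    by (rule card_gt_0_iff[THEN iffD2]) (use e in auto)
  ultimately have "card {j\<in>{..<n}. cell w j = cell w e} = 1" by simp
  then have "(\<Prod>p\<in>cell w ` {..<n}. \<mu> (card {e\<in>{..<n}. cell w e = p})) = 0"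
    using assms(1) e(1) by (intro prod_zero bexI[of _ "cell w e"]) auto
  then show ?thesis using False by simp
qed

end

lemma interleave_Cons: "interleave (a # as) (b # bs) = a # b # interleave as bs"
  by (simp add: interleave_def)

lemma length_interleave: "length is = length ks \<Longrightarrow> length (interleave is ks) = 2 * length is"
  by (induction "is" ks rule: list_induct2) (simp_all add: interleave_def)

lemma set_interleave: "length is = length ks \<Longrightarrow> set (interleave is ks) = set is \<union> set ks"
  by (induction "is" ks rule: list_induct2) (auto simp: interleave_def)

lemma nth_interleave:
  assumes "length is = length ks" "m < length is"
  shows "interleave is ks ! (2 * m) = is ! m \<and> interleave is ks ! Suc (2 * m) = ks ! m"
  using assms
proof (induction "is" ks arbitrary: m rule: list_induct2)
  case (Cons a as b bs)
  then show ?case by (cases m) (simp_all add: interleave_Cons)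
qed simp

lemma prod_interleave_eq_prod_cells:
  fixes Y :: "'v \<Rightarrow> 'v \<Rightarrow> 'b::comm_monoid_mult"
  assumes "length is = l" "length ks = l"
  shows "(\<Prod>m<l. Y (is ! m) (ks ! m) * Y (is ! (Suc m mod l)) (ks ! m))
       = (\<Prod>e<2 * l. case_prod Y (cell (\<lambda>j. interleave is ks ! (j mod (2 * l))) e))"
proof (cases l)
  case (Suc k)
  define w where "w = (\<lambda>j. interleave is ks ! (j mod (2 * l)))"
  have w: "w (2 * m) = is ! m" "w (Suc (2 * m)) = ks ! m"
      "w (Suc (Suc (2 * m))) = is ! (Suc m mod l)" if "m < l" for m
  proof -
    have "Suc (Suc (2 * m)) mod (2 * l) = 2 * (Suc m mod l)" by (simp add: mult_mod_right)
    then show "w (2 * m) = is ! m" "w (Suc (2 * m)) = ks ! m"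
      "w (Suc (Suc (2 * m))) = is ! (Suc m mod l)"
      using that assms nth_interleave[of "is" ks] Suc by (simp_all add: w_def)
  qed
  have "(\<Prod>m<l. Y (is ! m) (ks ! m) * Y (is ! (Suc m mod l)) (ks ! m))
      = (\<Prod>m<l. case_prod Y (cell w (2 * m)) * case_prod Y (cell w (Suc (2 * m))))"
    by (rule prod.cong) (simp_all add: cell_def w)
  also have "\<dots> = (\<Prod>e<2 * l. case_prod Y (cell w e))"
    using prod.in_pairs_0[of "\<lambda>e. case_prod Y (cell w e)" k] Suc
    by (simp add: lessThan_Suc_atMost[symmetric])
  finally show ?thesis unfolding w_def .
qed simp

lemma prod_comp_eq_prod_power_card_fibres:
  fixes h :: "'b \<Rightarrow> 'c::comm_monoid_mult"
  assumes "finite A"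
  shows "(\<Prod>x\<in>A. h (g x)) = (\<Prod>y\<in>g ` A. h y ^ card {x\<in>A. g x = y})"
  using prod.image_gen[OF assms, of "\<lambda>x. h (g x)" g] by simp

lemma (in finite_measure) integrable_power_le:
  fixes X :: "'a \<Rightarrow> real"
  assumes "X \<in> borel_measurable M" "integrable M (\<lambda>x. X x ^ m)" "even m" "k \<le> m"
  shows "integrable M (\<lambda>x. X x ^ k)"
proof (rule Bochner_Integration.integrable_bound)
  show "integrable M (\<lambda>x. 1 + X x ^ m)" using assms(2) by simp
  have "\<bar>y\<bar> ^ k \<le> 1 + y ^ m" for y :: real
  proof (cases "\<bar>y\<bar> \<le> 1")
    case True
    then have "\<bar>y\<bar> ^ k \<le> 1" by (simp add: power_le_one)
    moreover have "0 \<le> y ^ m" using assms(3) by (simp add: zero_le_even_power)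
    ultimately show ?thesis by linarith
  next
    case False
    then have "\<bar>y\<bar> ^ k \<le> \<bar>y\<bar> ^ m" using assms(4) by (intro power_increasing) auto
    then show ?thesis using assms(3) by (simp add: power_even_abs)
  qed
  then show "AE x in M. norm (X x ^ k) \<le> norm (1 + X x ^ m)"
    using assms(3) by (auto simp: power_abs zero_le_even_power)
qed (use assms(1) in simp)

lemma expectation_prod_powers_iid:
  fixes X :: "'i \<Rightarrow> 'a \<Rightarrow> real"
  assumes "prob_space M" "prob_space.indep_vars M (\<lambda>_. borel) X J" "finite J"
    and distr: "\<And>i. i \<in> J \<Longrightarrow> distr M borel (X i) = D"
    and integrable: "\<And>i. i \<in> J \<Longrightarrow> integrable D (\<lambda>x. x ^ c i)"
  shows "prob_space.expectation M (\<lambda>\<omega>. \<Prod>i\<in>J. X i \<omega> ^ c i) = (\<Prod>i\<in>J. \<integral>x. x ^ c i \<partial>D)"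
proof -
  interpret prob_space M by fact
  have X: "X i \<in> borel_measurable M" if "i \<in> J" for i
    using assms(2) that by (simp add: indep_vars_def)
  have integral: "integrable M (\<lambda>\<omega>. X i \<omega> ^ c i) \<and> expectation (\<lambda>\<omega>. X i \<omega> ^ c i) = (\<integral>x. x ^ c i \<partial>D)"
    if "i \<in> J" for i
    using integrable_distr_eq[OF X[OF that], of "\<lambda>x. x ^ c i"]
      integral_distr[OF X[OF that], of "\<lambda>x. x ^ c i"] integrable[OF that] distr[OF that]
    by simp
  have "indep_vars (\<lambda>_. borel) (\<lambda>i \<omega>. X i \<omega> ^ c i) J"
    using indep_vars_compose2[OF assms(2), of "\<lambda>i x. x ^ c i" "\<lambda>_. borel"] by simp
  then have "expectation (\<lambda>\<omega>. \<Prod>i\<in>J. X i \<omega> ^ c i) = (\<Prod>i\<in>J. expectation (\<lambda>\<omega>. X i \<omega> ^ c i))"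
    using indep_vars_lebesgue_integral[OF assms(3)] integral by blast
  then show ?thesis using integral by simp
qed

lemma expectation_prod_interleave:
  fixes Y :: "nat \<Rightarrow> nat \<Rightarrow> 'a \<Rightarrow> real"
  assumes "prob_space M" and indep: "prob_space.indep_vars M (\<lambda>_. borel) (\<lambda>(i, j). Y i j) UNIV"
    and ident: "\<And>i j. distr M borel (Y i j) = distr M borel (Y 1 1)"
    and moment: "integrable M (\<lambda>\<omega>. Y 1 1 \<omega> ^ (2 * l))"
    and lens: "length is = l" "length ks = l"
  defines "w \<equiv> \<lambda>j. interleave is ks ! (j mod (2 * l))"
  shows "prob_space.expectation M
           (\<lambda>\<omega>. \<Prod>m<l. Y (is ! m) (ks ! m) \<omega> * Y (is ! (Suc m mod l)) (ks ! m) \<omega>)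
       = (\<Prod>p\<in>cell w ` {..<2 * l}.
           prob_space.expectation M (\<lambda>\<omega>. Y 1 1 \<omega> ^ card {e\<in>{..<2 * l}. cell w e = p}))"
proof -
  interpret P: prob_space M by fact
  define D where "D = distr M borel (Y 1 1)"
  define mult where "mult p = card {e\<in>{..<2 * l}. cell w e = p}" for p
  have Y: "Y i j \<in> borel_measurable M" for i j
    using indep by (force simp: P.indep_vars_def)
  have moment_D: "integrable D (\<lambda>x. x ^ k) \<and> (\<integral>x. x ^ k \<partial>D) = P.expectation (\<lambda>\<omega>. Y 1 1 \<omega> ^ k)"
    if "k \<le> 2 * l" for k
    using P.integrable_power_le[OF Y moment _ that] integrable_distr_eq[OF Y, of "\<lambda>x. x ^ k"]
      integral_distr[OF Y, of "\<lambda>x. x ^ k"] by (simp add: D_def)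
  have mult_le: "mult p \<le> 2 * l" for p
    unfolding mult_def using card_mono[of "{..<2 * l}" "{e\<in>{..<2 * l}. cell w e = p}"] by auto
  have "(\<Prod>m<l. Y (is ! m) (ks ! m) \<omega> * Y (is ! (Suc m mod l)) (ks ! m) \<omega>)
      = (\<Prod>p\<in>cell w ` {..<2 * l}. (\<lambda>(i, j). Y i j) p \<omega> ^ mult p)" for \<omega>
    using prod_interleave_eq_prod_cells[OF lens, of "\<lambda>i j. Y i j \<omega>"]
      prod_comp_eq_prod_power_card_fibres[of "{..<2 * l}" "\<lambda>p. (\<lambda>(i, j). Y i j) p \<omega>" "cell w"]
    by (simp add: w_def mult_def case_prod_beta)
  moreover have "P.expectation (\<lambda>\<omega>. \<Prod>p\<in>cell w ` {..<2 * l}. (\<lambda>(i, j). Y i j) p \<omega> ^ mult p)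
      = (\<Prod>p\<in>cell w ` {..<2 * l}. \<integral>x. x ^ mult p \<partial>D)"
    using P.indep_vars_subset[OF indep] ident moment_D[OF mult_le]
    by (intro expectation_prod_powers_iid[OF assms(1)]) (auto simp: D_def)
  ultimately show ?thesis using moment_D[OF mult_le] by (simp add: mult_def)
qed

lemma tree_walk_interleave:
  assumes "length is = l" "length ks = l" "card (set is \<union> set ks) = Suc l"
  shows "tree_walk (\<lambda>j. interleave is ks ! (j mod (2 * l))) (2 * l) l"
proof
  show "0 < 2 * l" using assms by (cases l) auto
  have "(\<lambda>j. interleave is ks ! (j mod (2 * l))) ` {..<2 * l} = set (interleave is ks)"
    using length_interleave[of "is" ks] assms(1,2) by (auto simp: set_conv_nth)
  then show "card ((\<lambda>j. interleave is ks ! (j mod (2 * l))) ` {..<2 * l}) = Suc l"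
    using set_interleave[of "is" ks] assms by simp
qed simp_all

lemma interleave_in_balanced_trees_iff:
  assumes "length is = l" "length ks = l" "finite V" "card V = Suc l" "set is \<union> set ks = V"
  defines "w \<equiv> \<lambda>j. interleave is ks ! (j mod (2 * l))"
  shows "circuit_graph (interleave is ks) \<in> balanced_trees V
     \<longleftrightarrow> (\<forall>e<2 * l. 2 \<le> card {j\<in>{..<2 * l}. cell w j = cell w e})"
proof -
  interpret tree_walk w "2 * l" l
    unfolding w_def using tree_walk_interleave[OF assms(1,2)] assms(4,5) by simp
  have "circuit_graph (interleave is ks) \<in> balanced_trees V
      \<longleftrightarrow> balanced (circuit_graph (interleave is ks))"
    using assms(1-5) length_pos length_interleave[of "is" ks] set_interleave[of "is" ks]
    by (auto simp: balanced_trees_def circuits_def is_route_def)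
  also have "\<dots> \<longleftrightarrow> (\<exists>f. reversal_pairing w (2 * l) f)"
    using balanced_circuit_graph_iff[of "interleave is ks"] length_interleave[of "is" ks] assms(1,2)
    by (simp add: w_def)
  finally show ?thesis using ex_reversal_pairing_iff by simp
qed

theorem lemma4p5:
  fixes M :: "'a measure" and Y :: "nat \<Rightarrow> nat \<Rightarrow> 'a \<Rightarrow> real"
    and l :: nat and V :: "nat set" and "is" ks :: "nat list"
  assumes "prob_space M"
    and indep: "prob_space.indep_vars M (\<lambda>_. borel) (\<lambda>(i, j). Y i j) UNIV"
    and ident: "\<And>i j. distr M borel (Y i j) = distr M borel (Y 1 1)"
    and mean: "prob_space.expectation M (Y 1 1) = 0"
    and var: "prob_space.expectation M (\<lambda>\<omega>. (Y 1 1 \<omega>)^2) = 1"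
    and moment: "integrable M (\<lambda>\<omega>. (Y 1 1 \<omega>) ^ (2 * l))"
    and V: "finite V" "card V = l + 1"
    and lens: "length is = l" "length ks = l"
    and sub: "set is \<subseteq> V" "set ks \<subseteq> V"
    and cover: "set is \<union> set ks = V"
  shows "prob_space.expectation M
           (\<lambda>\<omega>. \<Prod>m<l. Y (is ! m) (ks ! m) \<omega> * Y (is ! (Suc m mod l)) (ks ! m) \<omega>)
         = (if circuit_graph (interleave is ks) \<in> balanced_trees V then 1 else 0)"
proof -
  define w where "w = (\<lambda>j. interleave is ks ! (j mod (2 * l)))"
  interpret tree_walk w "2 * l" l
    unfolding w_def using tree_walk_interleave[OF lens] cover V by simp
  show ?thesis
    using expectation_prod_interleave[OF assms(1) indep ident moment lens]
      interleave_in_balanced_trees_iff[OF lens V(1) _ cover] V(2) mean var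
      prod_cell_fibres[of "\<lambda>k. prob_space.expectation M (\<lambda>\<omega>. Y 1 1 \<omega> ^ k)"]
    by (simp add: w_def)
qed

end
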